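(* Let $\mathbb{S}$ be a locally finite (i.e. $\mathbb{S}\cap H$ is finite for every bounded $H\subset\mathbb{R}$), unbounded subset of $[0,\infty)$ with $0\in\mathbb{S}$. Let $(X_t)_{t\in\mathbb{N}}$ be an $\mathbb{S}$-valued process adapted to a filtration $(\mathcal{F}_t)_{t\in\mathbb{N}}$ with $\mathbb{P}[X_1=0]=1$. Assume that for each $x,y\in\mathbb{S}$ there exist $m(x,y)\in\mathbb{N}$ and $\varphi(x,y)>0$ such that $\mathbb{P}[X_{t+m(X_t,y)}=y\mid\mathcal{F}_t]\ge\varphi(X_t,y)$ a.s. for all $t\in\mathbb{N}$. Then $\limsup_{t\to\infty}X_t=\infty$ a.s. If in addition $\mathbb{P}[\eta_{n+1}<\infty\mid\tau_n<\infty]=\mathbb{P}[\eta_1<\infty]$ for all $n\in\mathbb{N}$, then exactly one of the following holds: (i) $\mathbb{P}[\eta_1<\infty]<1$ and $\lim_{t\to\infty}X_t=\infty$ a.s.; or (ii) $\mathbb{P}[\eta_1<\infty]=1$ and $\liminf_{t\to\infty}X_t=0$ a.s.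
   Context: $\mathbb{N}=\{1,2,\dots\}$. Return times to $0$: $\tau_0:=1$ and $\tau_n:=\min\{t>\tau_{n-1}:X_t=0\}$ for $n\in\mathbb{N}$ (with $\min\emptyset=\infty$); when $\tau_n<\infty$, $\eta_n:=\tau_n-\tau_{n-1}$ is the duration of the $n$th excursion (with $\eta_n=\infty$ otherwise). *)

theory Defs
  imports "HOL-Probability.Probability" "HOL-Library.Extended_Nat"
begin

text \<open>Return times to 0 (time index set is {1,2,...}; tau 0 = 1).
  Values in enat, with \<infinity> meaning "no such time".\<close>
fun ret_time :: "(nat \<Rightarrow> 'a \<Rightarrow> real) \<Rightarrow> nat \<Rightarrow> 'a \<Rightarrow> enat" where
  "ret_time X 0 \<omega> = 1"
| "ret_time X (Suc n) \<omega> =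
     (case ret_time X n \<omega> of
        \<infinity> \<Rightarrow> \<infinity>
      | enat s \<Rightarrow> (if \<exists>t>s. X t \<omega> = 0 then enat (LEAST t. t > s \<and> X t \<omega> = 0) else \<infinity>))"

definition exc_dur :: "(nat \<Rightarrow> 'a \<Rightarrow> real) \<Rightarrow> nat \<Rightarrow> 'a \<Rightarrow> enat" where
  "exc_dur X n \<omega> = (if ret_time X n \<omega> = \<infinity> then \<infinity>
                     else ret_time X n \<omega> - ret_time X (n - 1) \<omega>)"

definition locally_finite_set :: "real set \<Rightarrow> bool" where
  "locally_finite_set S \<longleftrightarrow> (\<forall>H. bounded H \<longrightarrow> finite (S \<inter> H))"

end

theory Submission
  imports Defs
begin

text \<open>Fix a target \<open>y \<in> S\<close> and a finite \<open>K \<subseteq> S\<close>. Uniformly over starting points in \<open>K\<close>, the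
  process hits \<open>y\<close> within \<open>D\<close> steps with probability at least \<open>\<delta> > 0\<close>. So on the event of
  avoiding \<open>y\<close> after time \<open>s\<close>, the probabilities of being in \<open>K\<close> at successive times telescope
  against the decreasing avoidance probabilities and are summable; by Borel--Cantelli, a path that
  visits \<open>K\<close> infinitely often almost surely hits \<open>y\<close> infinitely often.

  With \<open>K = S \<inter> [0, n]\<close> and \<open>y > n\<close> this gives \<open>limsup X = \<infinity>\<close>; with \<open>y = 0\<close> it shows that
  \<open>X \<rightarrow> \<infinity>\<close> unless \<open>0\<close> is visited infinitely often. Under the renewal hypothesis the
  probability of \<open>n\<close> returns to \<open>0\<close> is \<open>p\<^sup>n\<close>, so there are finitely many returns if \<open>p < 1\<close>
  and infinitely many, whence \<open>liminf X = 0\<close>, if \<open>p = 1\<close>.\<close>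

lemma ret_time_enat_ge: "ret_time X n \<omega> = enat s \<Longrightarrow> Suc n \<le> s"
proof (induction n arbitrary: s)
  case 0
  then show ?case by (simp add: one_enat_def)
next
  case (Suc n)
  then obtain r where r: "ret_time X n \<omega> = enat r"
    by (cases "ret_time X n \<omega>") auto
  with Suc.prems have ex: "\<exists>t>r. X t \<omega> = 0" and s: "s = (LEAST t. t > r \<and> X t \<omega> = 0)"
    by (auto split: if_splits)
  from ex have "r < s" unfolding s by (metis (mono_tags, lifting) LeastI)
  with Suc.IH[OF r] show ?case by simp
qed

lemma ret_time_Suc_eq_enat_iff:
  "ret_time X (Suc n) \<omega> = enat k \<longleftrightarrow>
    (\<exists>s<k. ret_time X n \<omega> = enat s \<and> X k \<omega> = 0 \<and> (\<forall>t. s < t \<and> t < k \<longrightarrow> X t \<omega> \<noteq> 0))"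
proof (cases "ret_time X n \<omega>")
  case (enat r)
  show ?thesis
  proof
    assume "ret_time X (Suc n) \<omega> = enat k"
    with enat have ex: "\<exists>t>r. X t \<omega> = 0" and k: "k = (LEAST t. t > r \<and> X t \<omega> = 0)"
      by (auto split: if_splits)
    have "r < k \<and> X k \<omega> = 0" unfolding k using ex by (metis (mono_tags, lifting) LeastI)
    moreover have "\<forall>t. r < t \<and> t < k \<longrightarrow> X t \<omega> \<noteq> 0" unfolding k using not_less_Least by blast
    ultimately show "\<exists>s<k. ret_time X n \<omega> = enat s \<and> X k \<omega> = 0 \<and> (\<forall>t. s < t \<and> t < k \<longrightarrow> X t \<omega> \<noteq> 0)"
      using enat by auto
  next
    assume "\<exists>s<k. ret_time X n \<omega> = enat s \<and> X k \<omega> = 0 \<and> (\<forall>t. s < t \<and> t < k \<longrightarrow> X t \<omega> \<noteq> 0)"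
    then have h: "r < k" "X k \<omega> = 0" "\<forall>t. r < t \<and> t < k \<longrightarrow> X t \<omega> \<noteq> 0" using enat by auto
    have "(LEAST t. t > r \<and> X t \<omega> = 0) = k"
      by (rule Least_equality) (use h in \<open>auto simp: not_less[symmetric]\<close>)
    then show "ret_time X (Suc n) \<omega> = enat k" using enat h by auto
  qed
qed simp

lemma ret_time_finite_Suc_imp: "ret_time X (Suc n) \<omega> < \<infinity> \<Longrightarrow> ret_time X n \<omega> < \<infinity>"
  by (cases "ret_time X n \<omega>") (simp_all add: less_top[symmetric])

lemma exc_dur_finite_iff: "exc_dur X n \<omega> < \<infinity> \<longleftrightarrow> ret_time X n \<omega> < \<infinity>"
  unfolding exc_dur_def less_top[symmetric]
  by (cases "ret_time X n \<omega>"; cases "ret_time X (n - 1) \<omega>") simp_all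

lemma ret_time_finite_iff_frequently_zero:
  "(\<forall>n. ret_time X n \<omega> < \<infinity>) \<longleftrightarrow> (\<exists>\<^sub>F t in sequentially. X t \<omega> = 0)"
proof
  assume fin: "\<forall>n. ret_time X n \<omega> < \<infinity>"
  show "\<exists>\<^sub>F t in sequentially. X t \<omega> = 0"
    unfolding frequently_sequentially
  proof
    fix N
    obtain k where k: "ret_time X (Suc N) \<omega> = enat k"
      using fin[rule_format, of "Suc N"] by (rule less_infinityE)
    then have "X k \<omega> = 0" using ret_time_Suc_eq_enat_iff[THEN iffD1, OF k] by blast
    moreover have "N \<le> k" using ret_time_enat_ge[OF k] by simp
    ultimately show "\<exists>t\<ge>N. X t \<omega> = 0" by blast
  qed
next
  assume freq: "\<exists>\<^sub>F t in sequentially. X t \<omega> = 0"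
  show "\<forall>n. ret_time X n \<omega> < \<infinity>"
  proof
    fix n show "ret_time X n \<omega> < \<infinity>"
    proof (induction n)
      case 0
      then show ?case by (simp add: one_enat_def)
    next
      case (Suc n)
      then obtain r where r: "ret_time X n \<omega> = enat r" by (rule less_infinityE)
      from freq obtain t where "Suc r \<le> t" "X t \<omega> = 0" unfolding frequently_sequentially by blast
      then have "\<exists>t>r. X t \<omega> = 0" by (intro exI[of _ t]) auto
      then show ?case using r by simp
    qed
  qed
qed

text \<open>From now on return times are handled through \<open>ret_time_Suc_eq_enat_iff\<close>; unfolding the
  recursion only clutters the goals.\<close>
declare ret_time.simps(2) [simp del]

lemma sum_shifted_differences:
  fixes a :: "nat \<Rightarrow> 'b::ab_group_add"
  shows "(\<Sum>j<L. a j - a (j + D)) = (\<Sum>j<D. a j) - (\<Sum>j<D. a (j + L))"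
proof (induction L)
  case 0
  then show ?case by simp
next
  case (Suc L)
  have step: "(\<Sum>j<D. a (j + L)) - (\<Sum>j<D. a (j + Suc L)) = a L - a (L + D)"
    using sum_lessThan_telescope'[of "\<lambda>j. a (j + L)" D] by (simp add: sum_subtractf add.commute)
  have "(\<Sum>j<Suc L. a j - a (j + D)) = (\<Sum>j<D. a j) - (\<Sum>j<D. a (j + L)) + (a L - a (L + D))"
    using Suc by simp
  also have "\<dots> = (\<Sum>j<D. a j) - (\<Sum>j<D. a (j + Suc L))"
    unfolding step[symmetric] by (simp add: algebra_simps)
  finally show ?case .
qed

lemma geometric_if_constant_ratio:
  fixes r :: "nat \<Rightarrow> real"
  assumes ratio: "\<And>n. 1 \<le> n \<Longrightarrow> r (Suc n) / r n = p"
    and decr: "\<And>n. r (Suc n) \<le> r n" and nonneg: "\<And>n. 0 \<le> r n" and first: "r 1 = p"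
  shows "r (Suc n) = p ^ Suc n"
proof (induction n)
  case 0
  then show ?case using first by simp
next
  case (Suc n)
  show ?case
  proof (cases "r (Suc n) = 0")
    case True
    then have "p = 0" using ratio[of "Suc n"] by simp
    moreover have "r (Suc (Suc n)) = 0" using decr[of "Suc n"] nonneg[of "Suc (Suc n)"] True by simp
    ultimately show ?thesis by simp
  next
    case False
    then have "r (Suc (Suc n)) = p * r (Suc n)" using ratio[of "Suc n"] by (simp add: field_simps)
    then show ?thesis using Suc.IH by simp
  qed
qed

lemma limsup_ereal_eq_PInf_if_frequently_gt:
  assumes "\<And>c. \<exists>\<^sub>F t in sequentially. c < f t"
  shows "limsup (\<lambda>t. ereal (f t)) = \<infinity>"
proof (rule ccontr)
  assume "limsup (\<lambda>t. ereal (f t)) \<noteq> \<infinity>"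
  then obtain n :: nat where "limsup (\<lambda>t. ereal (f t)) < ereal (real n)"
    using less_PInf_Ex_of_nat by blast
  then have "eventually (\<lambda>t. ereal (f t) < ereal (real n)) sequentially"
    by (rule Limsup_lessD)
  then have "eventually (\<lambda>t. \<not> real n < f t) sequentially"
    by (auto elim: eventually_mono)
  then show False using assms[of "real n"] by (simp add: frequently_def)
qed

lemma liminf_ereal_eq_0_if_frequently_0:
  assumes nonneg: "eventually (\<lambda>t. 0 \<le> f t) sequentially"
    and zero: "\<exists>\<^sub>F t in sequentially. f t = 0"
  shows "liminf (\<lambda>t. ereal (f t)) = 0"
proof (rule antisym)
  show "0 \<le> liminf (\<lambda>t. ereal (f t))"
    using nonneg by (intro Liminf_bounded) (auto elim: eventually_mono)
  show "liminf (\<lambda>t. ereal (f t)) \<le> 0"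
  proof (rule ccontr)
    assume "\<not> liminf (\<lambda>t. ereal (f t)) \<le> 0"
    then have "0 < liminf (\<lambda>t. ereal (f t))" by simp
    then have "eventually (\<lambda>t. 0 < ereal (f t)) sequentially"
      by (rule less_LiminfD)
    then have "eventually (\<lambda>t. f t \<noteq> 0) sequentially"
      by (auto elim: eventually_mono)
    then show False using zero by (simp add: frequently_def)
  qed
qed

lemma locally_finite_set_countable:
  assumes "locally_finite_set S"
  shows "countable S"
proof -
  have S_eq: "S = (\<Union>n::nat. S \<inter> {-real n..real n})"
    by (auto, metis real_arch_simple abs_le_iff minus_le_iff)
  have "finite (S \<inter> {-real n..real n})" for n
    using assms unfolding locally_finite_set_def by auto
  then have "countable (\<Union>n::nat. S \<inter> {-real n..real n})"
    by (intro countable_UN) (auto intro: countable_finite)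
  with S_eq show ?thesis by simp
qed

locale reachable_process = prob_space M for M :: "'a measure" +
  fixes F :: "nat \<Rightarrow> 'a measure" and X :: "nat \<Rightarrow> 'a \<Rightarrow> real" and S :: "real set"
    and m :: "real \<Rightarrow> real \<Rightarrow> nat" and \<phi> :: "real \<Rightarrow> real \<Rightarrow> real"
  assumes countable_S: "countable S"
    and filtration: "filtration (space M) F"
    and sigma_finite_F: "\<And>t. sigma_finite_subalgebra M (F t)"
    and adapted: "\<And>t. 1 \<le> t \<Longrightarrow> X t \<in> borel_measurable (F t)"
    and X_in_S: "\<And>t \<omega>. 1 \<le> t \<Longrightarrow> \<omega> \<in> space M \<Longrightarrow> X t \<omega> \<in> S"
    and \<phi>_pos: "\<And>x y. x \<in> S \<Longrightarrow> y \<in> S \<Longrightarrow> 0 < \<phi> x y"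
    and reach: "\<And>y t. y \<in> S \<Longrightarrow> 1 \<le> t \<Longrightarrow> AE \<omega> in M.
      \<phi> (X t \<omega>) y \<le> real_cond_exp M (F t) (indicator {\<omega>' \<in> space M. X (t + m (X t \<omega>') y) \<omega>' = y}) \<omega>"
begin

lemma subalgebra_F: "subalgebra M (F t)"
  using sigma_finite_F[of t] by (simp add: sigma_finite_subalgebra_def)

lemma sets_F_subset_events: "sets (F t) \<subseteq> events"
  using subalgebra_F[of t] by (simp add: subalgebra_def)

lemma space_F: "space (F t) = space M"
  using filtration.space_F[OF filtration] .

lemma X_preimage_in_F:
  assumes "1 \<le> u" "u \<le> t" "A \<in> sets borel"
  shows "{\<omega> \<in> space M. X u \<omega> \<in> A} \<in> sets (F t)"
proof -
  have "subalgebra (F t) (F u)"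
    using filtration.sets_F_mono[OF filtration \<open>u \<le> t\<close>] by (simp add: subalgebra_def space_F)
  then have "X u \<in> borel_measurable (F t)"
    using measurable_from_subalg adapted \<open>1 \<le> u\<close> by blast
  then have "X u -` A \<inter> space (F t) \<in> sets (F t)"
    using \<open>A \<in> sets borel\<close> by (rule measurable_sets)
  then show ?thesis by (simp add: space_F Int_def conj_commute)
qed

lemma X_eq_in_events: "1 \<le> u \<Longrightarrow> {\<omega> \<in> space M. X u \<omega> = c} \<in> events"
  using X_preimage_in_F[of u u "{c}"] sets_F_subset_events by auto

lemma hit_event_in_events:
  assumes "1 \<le> t" "y \<in> S"
  shows "{\<omega> \<in> space M. X (t + m (X t \<omega>) y) \<omega> = y} \<in> events"
proof -
  have "{\<omega> \<in> space M. X (t + m (X t \<omega>) y) \<omega> = y} =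
    (\<Union>x\<in>S. {\<omega> \<in> space M. X t \<omega> = x} \<inter> {\<omega> \<in> space M. X (t + m x y) \<omega> = y})"
    using X_in_S[OF assms(1)] by auto
  also have "\<dots> \<in> events"
    using assms by (intro sets.countable_UN'' countable_S sets.Int X_eq_in_events) auto
  finally show ?thesis .
qed

lemma prob_hit_ge:
  assumes t: "1 \<le> t" and y: "y \<in> S" and G: "G \<in> sets (F t)"
    and d: "\<And>\<omega>. \<omega> \<in> G \<Longrightarrow> d \<le> \<phi> (X t \<omega>) y"
  shows "d * prob G \<le> prob (G \<inter> {\<omega> \<in> space M. X (t + m (X t \<omega>) y) \<omega> = y})"
proof -
  define H where "H = {\<omega> \<in> space M. X (t + m (X t \<omega>) y) \<omega> = y}"
  interpret sigma_finite_subalgebra M "F t" by (rule sigma_finite_F)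
  have G_ev: "G \<in> events" using G sets_F_subset_events by auto
  have H_ev: "H \<in> events" unfolding H_def using hit_event_in_events[OF t y] .
  have ind_GH: "(\<lambda>\<omega>. indicator G \<omega> * indicator H \<omega> :: real) = indicator (G \<inter> H)"
    by (auto simp: indicator_def)
  have "integrable M (\<lambda>\<omega>. indicator G \<omega> * indicator H \<omega> :: real)"
    unfolding ind_GH using G_ev H_ev by (intro integrable_real_indicator) (auto simp: less_top[symmetric])
  note ce = real_cond_exp_intg[OF this _ borel_measurable_indicator[OF H_ev]]
  have "d * prob G = (\<integral>\<omega>. indicator G \<omega> * d \<partial>M)"
    using G_ev by (simp add: mult.commute)
  also have "\<dots> \<le> (\<integral>\<omega>. indicator G \<omega> * real_cond_exp M (F t) (indicator H) \<omega> \<partial>M)"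
  proof (rule integral_mono_AE)
    show "integrable M (\<lambda>\<omega>. indicator G \<omega> * d)" using G_ev
      by (intro integrable_mult_left integrable_real_indicator) (auto simp: less_top[symmetric])
    show "integrable M (\<lambda>\<omega>. indicator G \<omega> * real_cond_exp M (F t) (indicator H) \<omega>)"
      using ce(1) G by simp
    show "AE \<omega> in M. indicator G \<omega> * d \<le> indicator G \<omega> * real_cond_exp M (F t) (indicator H) \<omega>"
      using reach[OF y t] unfolding H_def[symmetric]
      by eventually_elim (auto simp: indicator_def dest: d order_trans)
  qed
  also have "\<dots> = prob (G \<inter> H)"
    using ce(2) G unfolding ind_GH using G_ev H_ev by simp
  finally show ?thesis unfolding H_def .
qed

definition avoiding :: "real \<Rightarrow> nat \<Rightarrow> nat \<Rightarrow> 'a set" where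
  "avoiding y s t = {\<omega> \<in> space M. \<forall>u. s < u \<and> u \<le> t \<longrightarrow> X u \<omega> \<noteq> y}"

lemma avoiding_in_F: "avoiding y s t \<in> sets (F t)"
proof -
  have "avoiding y s t = space (F t) - (\<Union>u\<in>{s<..t}. {\<omega> \<in> space M. X u \<omega> \<in> {y}})"
    unfolding avoiding_def space_F by auto
  also have "\<dots> \<in> sets (F t)"
    by (intro sets.Diff sets.top sets.finite_UN X_preimage_in_F) auto
  finally show ?thesis .
qed

lemma avoiding_in_events: "avoiding y s t \<in> events"
  using avoiding_in_F sets_F_subset_events by blast

text \<open>A visit to \<open>K\<close> at time \<open>t\<close> while avoiding \<open>y\<close> is followed, with conditional probability at
  least \<open>\<delta>\<close>, by a hit of \<open>y\<close> no later than \<open>t + D\<close>.\<close>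
lemma prob_avoiding_decrease:
  assumes y: "y \<in> S" and s: "s < t" and K: "K \<in> sets borel"
    and bounds: "\<And>x. x \<in> K \<Longrightarrow> \<delta> \<le> \<phi> x y \<and> m x y \<le> D"
  shows "\<delta> * prob (avoiding y s t \<inter> {\<omega> \<in> space M. X t \<omega> \<in> K})
    \<le> prob (avoiding y s t) - prob (avoiding y s (t + D))"
proof -
  have t: "1 \<le> t" using s by simp
  define G where "G = avoiding y s t \<inter> {\<omega> \<in> space M. X t \<omega> \<in> K}"
  define H where "H = {\<omega> \<in> space M. X (t + m (X t \<omega>) y) \<omega> = y}"
  have G_F: "G \<in> sets (F t)"
    unfolding G_def using avoiding_in_F X_preimage_in_F[OF t order_refl K] by blast
  have "\<delta> * prob G \<le> prob (G \<inter> H)"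
    unfolding H_def using bounds by (intro prob_hit_ge[OF t y G_F]) (auto simp: G_def)
  moreover have "prob (avoiding y s (t + D)) \<le> prob (avoiding y s t) - prob (G \<inter> H)"
  proof -
    have GH: "G \<inter> H \<in> events" "G \<inter> H \<subseteq> avoiding y s t"
      using G_F sets_F_subset_events hit_event_in_events[OF t y] by (auto simp: H_def G_def)
    have "avoiding y s (t + D) \<subseteq> avoiding y s t - G \<inter> H"
      using s bounds by (fastforce simp: avoiding_def G_def H_def)
    then have "prob (avoiding y s (t + D)) \<le> prob (avoiding y s t - G \<inter> H)"
      using GH avoiding_in_events by (intro finite_measure_mono) auto
    also have "\<dots> = prob (avoiding y s t) - prob (G \<inter> H)"
      using GH avoiding_in_events by (intro finite_measure_Diff) auto
    finally show ?thesis .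
  qed
  ultimately show ?thesis unfolding G_def by linarith
qed

lemma summable_prob_avoiding_visits:
  assumes K: "finite K" "K \<subseteq> S" and y: "y \<in> S"
  shows "summable (\<lambda>j. prob (avoiding y s (j + Suc s) \<inter> {\<omega> \<in> space M. X (j + Suc s) \<omega> \<in> K}))"
proof -
  define \<delta> where "\<delta> = Min (insert 1 ((\<lambda>x. \<phi> x y) ` K))"
  define D where "D = Max (insert 0 ((\<lambda>x. m x y) ` K))"
  have \<delta>_pos: "0 < \<delta>"
    unfolding \<delta>_def using K y \<phi>_pos by (subst Min_gr_iff) auto
  have bounds: "\<delta> \<le> \<phi> x y \<and> m x y \<le> D" if "x \<in> K" for x
    unfolding \<delta>_def D_def using K that by (auto intro: Min_le Max_ge)
  define a where "a j = prob (avoiding y s (j + Suc s))" for j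
  define A where "A j = avoiding y s (j + Suc s) \<inter> {\<omega> \<in> space M. X (j + Suc s) \<omega> \<in> K}" for j
  have K_borel: "K \<in> sets borel"
    using K(1) by (intro borel_closed finite_imp_closed)
  have step: "\<delta> * prob (A j) \<le> a j - a (j + D)" for j
    using prob_avoiding_decrease[OF y _ K_borel bounds, of s "j + Suc s"]
    unfolding A_def a_def by (simp add: algebra_simps)
  have "(\<Sum>j<L. prob (A j)) \<le> D / \<delta>" for L
  proof -
    have "\<delta> * (\<Sum>j<L. prob (A j)) \<le> (\<Sum>j<L. a j - a (j + D))"
      unfolding sum_distrib_left by (intro sum_mono step)
    also have "\<dots> = (\<Sum>j<D. a j) - (\<Sum>j<D. a (j + L))"
      by (rule sum_shifted_differences)
    also have "\<dots> \<le> (\<Sum>j<D. 1) - 0"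
      by (intro diff_mono sum_mono sum_nonneg) (auto simp: a_def)
    finally show ?thesis
      using \<delta>_pos by (simp add: pos_le_divide_eq mult.commute)
  qed
  then show ?thesis
    unfolding A_def by (intro summableI_nonneg_bounded[OF measure_nonneg])
qed

lemma AE_avoiding_imp_finitely_many_visits:
  assumes "finite K" "K \<subseteq> S" "y \<in> S"
  shows "AE \<omega> in M. (\<forall>u>s. X u \<omega> \<noteq> y) \<longrightarrow> \<not> (\<exists>\<^sub>F t in sequentially. X t \<omega> \<in> K)"
proof -
  define A where "A j = avoiding y s (j + Suc s) \<inter> {\<omega> \<in> space M. X (j + Suc s) \<omega> \<in> K}" for j
  have K_borel: "K \<in> sets borel"
    using assms(1) by (intro borel_closed finite_imp_closed)
  have "A j \<in> events" for j
    unfolding A_def using X_preimage_in_F[OF _ order_refl K_borel, of "j + Suc s"] sets_F_subset_events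
    by (intro sets.Int avoiding_in_events) auto
  then have "AE \<omega> in M. eventually (\<lambda>j. \<omega> \<in> space M - A j) sequentially"
    using summable_prob_avoiding_visits[OF assms]
    by (intro borel_cantelli_AE1) (auto simp: A_def less_top[symmetric])
  then show ?thesis
    using AE_space
  proof eventually_elim
    case (elim \<omega>)
    show ?case
    proof
      assume "\<forall>u>s. X u \<omega> \<noteq> y"
      then have "\<omega> \<in> avoiding y s t" for t
        using elim(2) by (simp add: avoiding_def)
      then have "eventually (\<lambda>j. X (j + Suc s) \<omega> \<notin> K) sequentially"
        using elim(1) by (auto simp: A_def elim: eventually_mono)
      then have "eventually (\<lambda>t. X t \<omega> \<notin> K) sequentially"
        by (rule eventually_sequentially_seg[THEN iffD1])
      then show "\<not> (\<exists>\<^sub>F t in sequentially. X t \<omega> \<in> K)"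
        by (simp add: frequently_def)
    qed
  qed
qed

lemma AE_frequently_visits_imp_frequently_hits:
  assumes "finite K" "K \<subseteq> S" "y \<in> S"
  shows "AE \<omega> in M. (\<exists>\<^sub>F t in sequentially. X t \<omega> \<in> K) \<longrightarrow> (\<exists>\<^sub>F t in sequentially. X t \<omega> = y)"
proof -
  have "AE \<omega> in M. \<forall>s. (\<forall>u>s. X u \<omega> \<noteq> y) \<longrightarrow> \<not> (\<exists>\<^sub>F t in sequentially. X t \<omega> \<in> K)"
    unfolding AE_all_countable using AE_avoiding_imp_finitely_many_visits[OF assms] by blast
  then show ?thesis
  proof eventually_elim
    case (elim \<omega>)
    show ?case
    proof
      assume "\<exists>\<^sub>F t in sequentially. X t \<omega> \<in> K"
      then have "\<exists>u>s. X u \<omega> = y" for s using elim by blast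
      then show "\<exists>\<^sub>F t in sequentially. X t \<omega> = y"
        unfolding frequently_sequentially by (meson less_imp_le)
    qed
  qed
qed

lemma AE_frequently_below_imp_frequently_hits:
  assumes "locally_finite_set S" and "\<And>n. y n \<in> S"
  shows "AE \<omega> in M. \<forall>n::nat.
    (\<exists>\<^sub>F t in sequentially. X t \<omega> \<in> S \<inter> {0..real n}) \<longrightarrow> (\<exists>\<^sub>F t in sequentially. X t \<omega> = y n)"
  unfolding AE_all_countable
proof
  fix n :: nat
  have "finite (S \<inter> {0..real n})"
    using assms(1) by (simp add: locally_finite_set_def)
  then show "AE \<omega> in M. (\<exists>\<^sub>F t in sequentially. X t \<omega> \<in> S \<inter> {0..real n})
      \<longrightarrow> (\<exists>\<^sub>F t in sequentially. X t \<omega> = y n)"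
    using assms(2) by (intro AE_frequently_visits_imp_frequently_hits) auto
qed

lemma eventually_X_in_S: "\<omega> \<in> space M \<Longrightarrow> eventually (\<lambda>t. X t \<omega> \<in> S) sequentially"
  using eventually_ge_at_top[of "1::nat"] by eventually_elim (rule X_in_S)

lemma AE_limsup_eq_PInf:
  assumes lf: "locally_finite_set S" and unbounded: "\<not> bdd_above S" and nonneg: "S \<subseteq> {0..}"
  shows "AE \<omega> in M. limsup (\<lambda>t. ereal (X t \<omega>)) = \<infinity>"
proof -
  have "\<exists>y. y \<in> S \<and> real n < y" for n :: nat
    using unbounded by (meson bdd_above_def not_le)
  then obtain y where y: "\<And>n. y n \<in> S" "\<And>n. real n < y n" by metis
  have "AE \<omega> in M. \<forall>n::nat.
      (\<exists>\<^sub>F t in sequentially. X t \<omega> \<in> S \<inter> {0..real n}) \<longrightarrow> (\<exists>\<^sub>F t in sequentially. X t \<omega> = y n)"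
    using AE_frequently_below_imp_frequently_hits[OF lf y(1)] .
  then show ?thesis
    using AE_space
  proof eventually_elim
    case (elim \<omega>)
    have freq: "\<exists>\<^sub>F t in sequentially. real n < X t \<omega>" for n :: nat
    proof (rule ccontr)
      assume "\<not> (\<exists>\<^sub>F t in sequentially. real n < X t \<omega>)"
      then have "eventually (\<lambda>t. X t \<omega> \<in> S \<inter> {0..real n}) sequentially"
        using eventually_X_in_S[OF elim(2)] nonneg
        by (auto simp: not_frequently elim: eventually_elim2)
      then have "\<exists>\<^sub>F t in sequentially. X t \<omega> \<in> S \<inter> {0..real n}"
        by (simp add: eventually_frequently)
      then have "\<exists>\<^sub>F t in sequentially. X t \<omega> = y n"
        using elim(1) by blast
      then have "\<exists>\<^sub>F t in sequentially. real n < X t \<omega>"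
        using y(2) by (auto elim: frequently_elim1)
      then show False using \<open>\<not> (\<exists>\<^sub>F t in sequentially. real n < X t \<omega>)\<close> by contradiction
    qed
    show ?case
    proof (rule limsup_ereal_eq_PInf_if_frequently_gt)
      fix c :: real
      obtain n :: nat where "c \<le> real n" using real_arch_simple by blast
      then show "\<exists>\<^sub>F t in sequentially. c < X t \<omega>"
        using freq[of n] by (auto elim: frequently_elim1)
    qed
  qed
qed

lemma AE_tendsto_at_top_if_finitely_many_zeros:
  assumes lf: "locally_finite_set S" and nonneg: "S \<subseteq> {0..}" and "0 \<in> S"
    and transient: "AE \<omega> in M. \<not> (\<exists>\<^sub>F t in sequentially. X t \<omega> = 0)"
  shows "AE \<omega> in M. filterlim (\<lambda>t. X t \<omega>) at_top sequentially"
proof -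
  have "AE \<omega> in M. \<forall>n::nat.
      (\<exists>\<^sub>F t in sequentially. X t \<omega> \<in> S \<inter> {0..real n}) \<longrightarrow> (\<exists>\<^sub>F t in sequentially. X t \<omega> = 0)"
    using AE_frequently_below_imp_frequently_hits[OF lf, of "\<lambda>_. 0"] \<open>0 \<in> S\<close> by blast
  with transient show ?thesis
    using AE_space
  proof eventually_elim
    case (elim \<omega>)
    show ?case
      unfolding filterlim_at_top
    proof
      fix c :: real
      obtain n :: nat where "c \<le> real n" using real_arch_simple by blast
      have "\<not> (\<exists>\<^sub>F t in sequentially. X t \<omega> \<in> S \<inter> {0..real n})"
        using elim(1,2) by blast
      then have "eventually (\<lambda>t. X t \<omega> \<notin> S \<inter> {0..real n}) sequentially"
        by (simp only: not_frequently)
      with eventually_X_in_S[OF elim(3)] show "eventually (\<lambda>t. c \<le> X t \<omega>) sequentially"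
        by eventually_elim (use nonneg \<open>c \<le> real n\<close> in force)
    qed
  qed
qed

lemma ret_time_eq_in_events: "{\<omega> \<in> space M. ret_time X n \<omega> = enat k} \<in> events"
proof (induction n arbitrary: k)
  case 0
  show ?case by (cases "k = 1") (auto simp: one_enat_def)
next
  case (Suc n)
  have "{\<omega> \<in> space M. ret_time X (Suc n) \<omega> = enat k} =
    (\<Union>s\<in>{1..<k}. {\<omega> \<in> space M. ret_time X n \<omega> = enat s} \<inter> {\<omega> \<in> space M. X k \<omega> = 0} \<inter>
       (space M - (\<Union>t\<in>{s<..<k}. {\<omega> \<in> space M. X t \<omega> = 0})))"
    unfolding ret_time_Suc_eq_enat_iff by (fastforce dest: ret_time_enat_ge)
  also have "\<dots> \<in> events"
    by (intro sets.finite_UN sets.Int sets.Diff sets.top Suc.IH X_eq_in_events) auto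
  finally show ?case .
qed

lemma ret_time_finite_in_events: "{\<omega> \<in> space M. ret_time X n \<omega> < \<infinity>} \<in> events"
proof -
  have "{\<omega> \<in> space M. ret_time X n \<omega> < \<infinity>} = (\<Union>k. {\<omega> \<in> space M. ret_time X n \<omega> = enat k})"
    by (auto elim: less_infinityE)
  then show ?thesis using ret_time_eq_in_events by auto
qed

lemma prob_ret_time_finite_eq_power:
  assumes renewal: "\<forall>n\<ge>1. prob {\<omega> \<in> space M. exc_dur X (n + 1) \<omega> < \<infinity> \<and> ret_time X n \<omega> < \<infinity>}
      / prob {\<omega> \<in> space M. ret_time X n \<omega> < \<infinity>} = prob {\<omega> \<in> space M. exc_dur X 1 \<omega> < \<infinity>}"
  shows "prob {\<omega> \<in> space M. ret_time X (Suc n) \<omega> < \<infinity>}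
    = prob {\<omega> \<in> space M. exc_dur X 1 \<omega> < \<infinity>} ^ Suc n"
proof -
  define r where "r n = prob {\<omega> \<in> space M. ret_time X n \<omega> < \<infinity>}" for n
  have "{\<omega> \<in> space M. exc_dur X (n + 1) \<omega> < \<infinity> \<and> ret_time X n \<omega> < \<infinity>}
      = {\<omega> \<in> space M. ret_time X (Suc n) \<omega> < \<infinity>}" for n
    unfolding exc_dur_finite_iff Suc_eq_plus1[symmetric] by (blast dest: ret_time_finite_Suc_imp)
  moreover have first: "{\<omega> \<in> space M. exc_dur X 1 \<omega> < \<infinity>} = {\<omega> \<in> space M. ret_time X 1 \<omega> < \<infinity>}"
    by (simp only: exc_dur_finite_iff)
  ultimately have "r (Suc n) / r n = r 1" if "1 \<le> n" for n
    using renewal that by (simp add: r_def)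
  moreover have "r (Suc n) \<le> r n" for n
    unfolding r_def
    by (rule finite_measure_mono[OF _ ret_time_finite_in_events]) (blast dest: ret_time_finite_Suc_imp)
  ultimately have "r (Suc n) = r 1 ^ Suc n"
    by (intro geometric_if_constant_ratio) (auto simp: r_def)
  then show ?thesis
    unfolding first by (simp only: r_def)
qed

lemma AE_finitely_many_zeros_if_return_prob_lt_1:
  assumes power: "\<And>n. prob {\<omega> \<in> space M. ret_time X (Suc n) \<omega> < \<infinity>} = p ^ Suc n" and "p < 1"
  shows "AE \<omega> in M. \<not> (\<exists>\<^sub>F t in sequentially. X t \<omega> = 0)"
proof (rule AE_I')
  define N where "N = (\<Inter>n. {\<omega> \<in> space M. ret_time X (Suc n) \<omega> < \<infinity>})"
  have N_ev: "N \<in> events"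
    unfolding N_def using ret_time_finite_in_events by auto
  have "0 \<le> p ^ Suc 0"
    unfolding power[symmetric] by (rule measure_nonneg)
  then have "(\<lambda>n. p ^ n) \<longlonglongrightarrow> 0"
    using \<open>p < 1\<close> by (intro LIMSEQ_power_zero) simp
  then have "(\<lambda>n. p ^ Suc n) \<longlonglongrightarrow> 0"
    by (rule LIMSEQ_Suc)
  moreover have "prob N \<le> p ^ Suc n" for n
    unfolding power[symmetric] N_def by (rule finite_measure_mono[OF _ ret_time_finite_in_events]) auto
  ultimately have "prob N \<le> 0"
    by (intro LIMSEQ_le_const) auto
  then have "prob N = 0"
    using measure_nonneg[of M N] by linarith
  then show "N \<in> null_sets M"
    using N_ev by (simp add: null_sets_def emeasure_eq_measure)
  show "{\<omega> \<in> space M. \<not> \<not> (\<exists>\<^sub>F t in sequentially. X t \<omega> = 0)} \<subseteq> N"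
    unfolding N_def not_not using ret_time_finite_iff_frequently_zero[of X] by blast
qed

lemma AE_frequently_zero_if_return_prob_1:
  assumes "\<And>n. prob {\<omega> \<in> space M. ret_time X (Suc n) \<omega> < \<infinity>} = 1"
  shows "AE \<omega> in M. \<exists>\<^sub>F t in sequentially. X t \<omega> = 0"
proof -
  have "AE \<omega> in M. \<omega> \<in> {\<omega> \<in> space M. ret_time X (Suc n) \<omega> < \<infinity>}" for n
    by (rule AE_prob_1[OF assms])
  then have "AE \<omega> in M. \<forall>n. \<omega> \<in> {\<omega> \<in> space M. ret_time X (Suc n) \<omega> < \<infinity>}"
    unfolding AE_all_countable ..
  then show ?thesis
  proof eventually_elim
    case (elim \<omega>)
    have "ret_time X n \<omega> < \<infinity>" for n
    proof (cases n)
      case 0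
      then show ?thesis by (simp add: one_enat_def)
    next
      case (Suc k)
      then show ?thesis using elim by blast
    qed
    then show ?case
      by (intro ret_time_finite_iff_frequently_zero[THEN iffD1] allI)
  qed
qed

lemma transient_or_recurrent:
  assumes lf: "locally_finite_set S" and nonneg: "S \<subseteq> {0..}" and "0 \<in> S"
    and renewal: "\<forall>n\<ge>1. prob {\<omega> \<in> space M. exc_dur X (n + 1) \<omega> < \<infinity> \<and> ret_time X n \<omega> < \<infinity>}
      / prob {\<omega> \<in> space M. ret_time X n \<omega> < \<infinity>} = prob {\<omega> \<in> space M. exc_dur X 1 \<omega> < \<infinity>}"
  shows "let p = prob {\<omega> \<in> space M. exc_dur X 1 \<omega> < \<infinity>};
      C1 = (p < 1 \<and> (AE \<omega> in M. filterlim (\<lambda>t. X t \<omega>) at_top sequentially));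
      C2 = (p = 1 \<and> (AE \<omega> in M. liminf (\<lambda>t. ereal (X t \<omega>)) = 0))
    in (C1 \<or> C2) \<and> \<not> (C1 \<and> C2)"
proof -
  define p where "p = prob {\<omega> \<in> space M. exc_dur X 1 \<omega> < \<infinity>}"
  have power: "prob {\<omega> \<in> space M. ret_time X (Suc n) \<omega> < \<infinity>} = p ^ Suc n" for n
    unfolding p_def using renewal by (rule prob_ret_time_finite_eq_power)
  have "p \<le> 1" by (simp add: p_def)
  then consider "p < 1" | "p = 1" by linarith
  then show ?thesis
  proof cases
    case 1
    then have "AE \<omega> in M. \<not> (\<exists>\<^sub>F t in sequentially. X t \<omega> = 0)"
      using power by (rule AE_finitely_many_zeros_if_return_prob_lt_1[rotated])
    then have "AE \<omega> in M. filterlim (\<lambda>t. X t \<omega>) at_top sequentially"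
      using assms(1-3) by (intro AE_tendsto_at_top_if_finitely_many_zeros)
    with 1 show ?thesis unfolding Let_def p_def[symmetric] by simp
  next
    case 2
    then have "AE \<omega> in M. \<exists>\<^sub>F t in sequentially. X t \<omega> = 0"
      using power by (intro AE_frequently_zero_if_return_prob_1) simp
    then have "AE \<omega> in M. liminf (\<lambda>t. ereal (X t \<omega>)) = 0"
      using AE_space
    proof eventually_elim
      case (elim \<omega>)
      have "eventually (\<lambda>t. 0 \<le> X t \<omega>) sequentially"
        using eventually_X_in_S[OF elim(2)] nonneg by (auto elim: eventually_mono)
      then show ?case using elim(1) by (rule liminf_ereal_eq_0_if_frequently_0)
    qed
    with 2 show ?thesis unfolding Let_def p_def[symmetric] by simp
  qed
qed

end

theorem proposition2p1:
  fixes M :: "'a measure" and F :: "nat \<Rightarrow> 'a measure"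
    and X :: "nat \<Rightarrow> 'a \<Rightarrow> real" and S :: "real set"
  assumes "prob_space M"
    and S_lf: "locally_finite_set S"
    and S_unb: "\<not> bdd_above S"
    and S_nonneg: "S \<subseteq> {0..}"
    and S0: "0 \<in> S"
    and filt: "filtration (space M) F"
    and sub: "\<And>t. sigma_finite_subalgebra M (F t)"
    and adapted: "\<And>t. t \<ge> 1 \<Longrightarrow> X t \<in> borel_measurable (F t)"
    and vals: "\<And>t \<omega>. t \<ge> 1 \<Longrightarrow> \<omega> \<in> space M \<Longrightarrow> X t \<omega> \<in> S"
    and start: "measure M {\<omega> \<in> space M. X 1 \<omega> = 0} = 1"
    and reach: "\<exists>(m :: real \<Rightarrow> real \<Rightarrow> nat) (\<phi> :: real \<Rightarrow> real \<Rightarrow> real).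
        (\<forall>x\<in>S. \<forall>y\<in>S. m x y \<ge> 1 \<and> \<phi> x y > 0) \<and>
        (\<forall>y\<in>S. \<forall>t\<ge>1. AE \<omega> in M.
            real_cond_exp M (F t)
              (\<lambda>\<omega>'. indicator {\<omega>'' \<in> space M. X (t + m (X t \<omega>'') y) \<omega>'' = y} \<omega>') \<omega>
            \<ge> \<phi> (X t \<omega>) y)"
  shows "(AE \<omega> in M. limsup (\<lambda>t. ereal (X t \<omega>)) = \<infinity>) \<and>
    ((\<forall>n\<ge>1. measure M {\<omega> \<in> space M. exc_dur X (n + 1) \<omega> < \<infinity> \<and> ret_time X n \<omega> < \<infinity>}
              / measure M {\<omega> \<in> space M. ret_time X n \<omega> < \<infinity>}
            = measure M {\<omega> \<in> space M. exc_dur X 1 \<omega> < \<infinity>})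
     \<longrightarrow>
     (let p = measure M {\<omega> \<in> space M. exc_dur X 1 \<omega> < \<infinity>};
          C1 = (p < 1 \<and> (AE \<omega> in M. filterlim (\<lambda>t. X t \<omega>) at_top sequentially));
          C2 = (p = 1 \<and> (AE \<omega> in M. liminf (\<lambda>t. ereal (X t \<omega>)) = 0))
      in (C1 \<or> C2) \<and> \<not> (C1 \<and> C2)))"
proof -
  from reach obtain m :: "real \<Rightarrow> real \<Rightarrow> nat" and \<phi> :: "real \<Rightarrow> real \<Rightarrow> real"
    where \<phi>_pos: "\<forall>x\<in>S. \<forall>y\<in>S. m x y \<ge> 1 \<and> \<phi> x y > 0"
      and hits: "\<forall>y\<in>S. \<forall>t\<ge>1. AE \<omega> in M. real_cond_exp M (F t)
        (indicator {\<omega>' \<in> space M. X (t + m (X t \<omega>') y) \<omega>' = y}) \<omega> \<ge> \<phi> (X t \<omega>) y"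
    by blast
  have "reachable_process M F X S m \<phi>"
  proof (intro reachable_process.intro reachable_process_axioms.intro)
    show "countable S" using S_lf by (rule locally_finite_set_countable)
    show "0 < \<phi> x y" if "x \<in> S" "y \<in> S" for x y using \<phi>_pos that by blast
    fix y and t :: nat
    assume "y \<in> S" "1 \<le> t"
    with hits show "AE \<omega> in M. \<phi> (X t \<omega>) y
      \<le> real_cond_exp M (F t) (indicator {\<omega>' \<in> space M. X (t + m (X t \<omega>') y) \<omega>' = y}) \<omega>"
      by blast
  qed (fact \<open>prob_space M\<close> filt sub adapted vals)+
  then interpret reachable_process M F X S m \<phi> .
  show ?thesis
    using AE_limsup_eq_PInf[OF S_lf S_unb S_nonneg] transient_or_recurrent[OF S_lf S_nonneg S0]
    by blast
qed

end
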